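(* Let $G=(V,E)$ be a finite undirected graph and $k\in\mathbb{N}$. For $v\in V$ let $N[v]=\{v\}\cup\{v'\in V:\{v,v'\}\in E\}$, let $L_v=(V^*vv)^\omega\cup(V^*(V\setminus N[v]))^\omega\subseteq V^\omega$, and $L_G=\bigcap_{v\in V}L_v$. If $G$ is $k$-colourable, then there exists a complete deterministic generalised Büchi automaton over the input alphabet $V$ with $k$ states recognising $L_G$.
   Context: A finite undirected graph is $G=(V,E)$ with $V$ finite and $E$ a set of 2-element subsets of $V$. A $k$-colouring is a map $c:V\to\{1,\dots,k\}$ with $c(v)\ne c(v')$ whenever $\{v,v'\}\in E$; $G$ is $k$-colourable if one exists. For a set $X$, $(X^*Y)^\omega$ denotes infinite concatenations of words of $X^*Y$. An automaton is a tuple $(Q,\Sigma,q_{\mathrm{init}},\Delta,\Gamma,\mathrm{col},W)$ with finite state set, finite input alphabet $\Sigma$, initial state, transitions $\Delta\subseteq Q\times\Sigma\times Q$, output alphabet $\Gamma$, labelling $\mathrm{col}:\Delta\to\Gamma$, acceptance condition $W\subseteq\Gamma^\omega$. A run on $w=a_1a_2\cdots$ is a sequence $(q_0,a_1,q_1)(q_1,a_2,q_2)\cdots$ of transitions with $q_0=q_{\mathrm{init}}$, accepting if its label sequence is in $W$; the recognised language is the set of words with an accepting run. A generalised Büchi automaton with finite output colour set $C$ has $\Gamma=2^C$ and $W=\{x : \text{every } c\in C \text{ occurs in infinitely many letters of } x\}$. Deterministic (resp. complete): for every $(p,a)\in Q\times\Sigma$ there is at most (resp. at least) one $q$ with $(p,a,q)\in\Delta$.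 *)

theory Defs
  imports Main
begin

definition finite_graph :: "'v set \<Rightarrow> 'v set set \<Rightarrow> bool" where
  "finite_graph V E \<longleftrightarrow> finite V \<and>
     (\<forall>e\<in>E. \<exists>a b. e = {a, b} \<and> a \<noteq> b \<and> a \<in> V \<and> b \<in> V)"

definition colouring :: "'v set \<Rightarrow> 'v set set \<Rightarrow> nat \<Rightarrow> ('v \<Rightarrow> nat) \<Rightarrow> bool" where
  "colouring V E k c \<longleftrightarrow> (\<forall>v\<in>V. c v \<in> {1..k}) \<and>
     (\<forall>v\<in>V. \<forall>v'\<in>V. {v, v'} \<in> E \<longrightarrow> c v \<noteq> c v')"

definition colourable :: "'v set \<Rightarrow> 'v set set \<Rightarrow> nat \<Rightarrow> bool" where
  "colourable V E k \<longleftrightarrow> (\<exists>c. colouring V E k c)"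

definition closed_nbhd :: "'v set \<Rightarrow> 'v set set \<Rightarrow> 'v \<Rightarrow> 'v set" where
  "closed_nbhd V E v = {v} \<union> {v'\<in>V. {v, v'} \<in> E}"

definition omega_words :: "'a set \<Rightarrow> (nat \<Rightarrow> 'a) set" where
  "omega_words S = {w. \<forall>i. w i \<in> S}"

definition star_conc :: "'a set \<Rightarrow> 'a list set \<Rightarrow> 'a list set" where
  "star_conc X Y = {u @ y | u y. set u \<subseteq> X \<and> y \<in> Y}"

text \<open>Infinite concatenation L^omega of nonempty words of L.\<close>
definition omega_iter :: "'a list set \<Rightarrow> (nat \<Rightarrow> 'a) set" where
  "omega_iter L = {w. \<exists>f. f 0 = 0 \<and> strict_mono f \<and>
       (\<forall>i. map w [f i..<f (Suc i)] \<in> L)}"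

definition L_v :: "'v set \<Rightarrow> 'v set set \<Rightarrow> 'v \<Rightarrow> (nat \<Rightarrow> 'v) set" where
  "L_v V E v = omega_iter (star_conc V {[v, v]})
             \<union> omega_iter (star_conc V {[x] | x. x \<in> V - closed_nbhd V E v})"

definition L_G :: "'v set \<Rightarrow> 'v set set \<Rightarrow> (nat \<Rightarrow> 'v) set" where
  "L_G V E = omega_words V \<inter> (\<Inter>v\<in>V. L_v V E v)"

definition is_gba :: "'q set \<Rightarrow> 'a set \<Rightarrow> 'q \<Rightarrow> ('q \<times> 'a \<times> 'q) set \<Rightarrow> 'c set
     \<Rightarrow> ('q \<times> 'a \<times> 'q \<Rightarrow> 'c set) \<Rightarrow> bool" where
  "is_gba Q Sig qi D C col \<longleftrightarrow> finite Q \<and> finite Sig \<and> qi \<in> Q \<and>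
     D \<subseteq> Q \<times> Sig \<times> Q \<and> finite C \<and> (\<forall>t\<in>D. col t \<subseteq> C)"

definition deterministic :: "'q set \<Rightarrow> 'a set \<Rightarrow> ('q \<times> 'a \<times> 'q) set \<Rightarrow> bool" where
  "deterministic Q Sig D \<longleftrightarrow>
     (\<forall>p\<in>Q. \<forall>a\<in>Sig. \<forall>q q'. (p, a, q) \<in> D \<and> (p, a, q') \<in> D \<longrightarrow> q = q')"

definition complete_aut :: "'q set \<Rightarrow> 'a set \<Rightarrow> ('q \<times> 'a \<times> 'q) set \<Rightarrow> bool" where
  "complete_aut Q Sig D \<longleftrightarrow> (\<forall>p\<in>Q. \<forall>a\<in>Sig. \<exists>q. (p, a, q) \<in> D)"

text \<open>A run on w is a state sequence r with r 0 = qi and (r i, w(i), r(i+1)) in D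
  (the paper's a_{i+1} is w i here, words being indexed from 0).\<close>
definition is_run :: "'q \<Rightarrow> ('q \<times> 'a \<times> 'q) set \<Rightarrow> (nat \<Rightarrow> 'a) \<Rightarrow> (nat \<Rightarrow> 'q) \<Rightarrow> bool" where
  "is_run qi D w r \<longleftrightarrow> r 0 = qi \<and> (\<forall>i. (r i, w i, r (Suc i)) \<in> D)"

definition gba_accepting :: "'c set \<Rightarrow> ('q \<times> 'a \<times> 'q \<Rightarrow> 'c set)
     \<Rightarrow> (nat \<Rightarrow> 'a) \<Rightarrow> (nat \<Rightarrow> 'q) \<Rightarrow> bool" where
  "gba_accepting C col w r \<longleftrightarrow>
     (\<forall>c\<in>C. \<exists>\<^sub>\<infinity>i. c \<in> col (r i, w i, r (Suc i)))"

definition gba_lang :: "'a set \<Rightarrow> 'q \<Rightarrow> ('q \<times> 'a \<times> 'q) set \<Rightarrow> 'c set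
     \<Rightarrow> ('q \<times> 'a \<times> 'q \<Rightarrow> 'c set) \<Rightarrow> (nat \<Rightarrow> 'a) set" where
  "gba_lang Sig qi D C col =
     {w \<in> omega_words Sig. \<exists>r. is_run qi D w r \<and> gba_accepting C col w r}"

end

theory Submission
  imports Defs "HOL-Library.Infinite_Set"
begin

text \<open>The states are the colours \<open>1..k\<close>, and reading a letter \<open>a\<close> always moves to the state
  \<open>c a\<close>, so the state records the colour of the previous letter. The acceptance colour of
  a vertex \<open>v\<close> is emitted when \<open>v\<close> is read in state \<open>c v\<close>, or when a non-neighbour of \<open>v\<close> is
  read. As \<open>c\<close> is proper, a letter coloured \<open>c v\<close> is \<open>v\<close> itself or a non-neighbour of \<open>v\<close>.
  Hence \<open>v\<close> is emitted infinitely often iff the word contains the factor \<open>v v\<close> infinitely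
  often or non-neighbours of \<open>v\<close> infinitely often, which is exactly membership in \<open>L_v\<close>.\<close>

lemma INFM_Suc_iff: "(\<exists>\<^sub>\<infinity>i. P (Suc i)) \<longleftrightarrow> (\<exists>\<^sub>\<infinity>i. P i)"
  unfolding INFM_nat by (metis Suc_less_eq Suc_lessE less_Suc_eq)

lemma map_upt_eq_appendD:
  assumes "map w [a..<b] = u @ y"
  shows "map w [a + length u..<a + length u + length y] = y"
proof -
  have len: "b - a = length u + length y"
    using arg_cong[OF assms, of length] by simp
  have "map w [a + length u..<b] = y"
    using arg_cong[OF assms, of "drop (length u)"] by (simp add: drop_map)
  with len show ?thesis
    by (cases "y = []") auto
qed

lemma omega_iter_star_conc_fixed_length_iff:
  assumes w: "w \<in> omega_words A" and len: "\<forall>y\<in>Y. length y = l" and "0 < l"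
  shows "w \<in> omega_iter (star_conc A Y) \<longleftrightarrow> (\<exists>\<^sub>\<infinity>i. map w [i..<i + l] \<in> Y)"
proof
  assume "w \<in> omega_iter (star_conc A Y)"
  then obtain f where "strict_mono f" and blocks: "\<And>j. map w [f j..<f (Suc j)] \<in> star_conc A Y"
    unfolding omega_iter_def by blast
  have "\<exists>i\<ge>m. map w [i..<i + l] \<in> Y" for m
  proof -
    obtain u y where "map w [f m..<f (Suc m)] = u @ y" and "y \<in> Y"
      using blocks[of m] unfolding star_conc_def by blast
    moreover have "m \<le> f m"
      using \<open>strict_mono f\<close> by (rule strict_mono_imp_increasing)
    ultimately show ?thesis
      using map_upt_eq_appendD len by (metis le_add1 order_trans)
  qed
  then show "\<exists>\<^sub>\<infinity>i. map w [i..<i + l] \<in> Y"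
    unfolding INFM_nat_le by blast
next
  assume "\<exists>\<^sub>\<infinity>i. map w [i..<i + l] \<in> Y"
  then obtain g where g: "\<And>m. m \<le> g m" "\<And>m. map w [g m..<g m + l] \<in> Y"
    unfolding INFM_nat_le by metis
  define f where "f = rec_nat 0 (\<lambda>_ m. g m + l)"
  have f_Suc: "f (Suc j) = g (f j) + l" for j
    by (simp add: f_def)
  have "f j < f (Suc j)" for j
    using g(1)[of "f j"] \<open>0 < l\<close> unfolding f_Suc by linarith
  then have "strict_mono f"
    by (simp add: strict_mono_Suc_iff)
  moreover have "map w [f j..<f (Suc j)] \<in> star_conc A Y" for j
  proof -
    have "map w [f j..<f (Suc j)] = map w [f j..<g (f j)] @ map w [g (f j)..<g (f j) + l]"
      unfolding f_Suc using upt_add_eq_append[OF g(1)] by simp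
    moreover have "set (map w [f j..<g (f j)]) \<subseteq> A"
      using w unfolding omega_words_def by auto
    ultimately show ?thesis
      using g(2) unfolding star_conc_def by blast
  qed
  moreover have "f 0 = 0"
    by (simp add: f_def)
  ultimately show "w \<in> omega_iter (star_conc A Y)"
    unfolding omega_iter_def by blast
qed

lemma L_v_iff:
  assumes w: "w \<in> omega_words V"
  shows "w \<in> L_v V E v \<longleftrightarrow>
           (\<exists>\<^sub>\<infinity>i. w i = v \<and> w (Suc i) = v) \<or> (\<exists>\<^sub>\<infinity>i. w i \<notin> closed_nbhd V E v)"
proof -
  have "w \<in> omega_iter (star_conc V {[v, v]}) \<longleftrightarrow> (\<exists>\<^sub>\<infinity>i. map w [i..<i + 2] \<in> {[v, v]})"
    by (rule omega_iter_star_conc_fixed_length_iff[OF w]) auto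
  moreover have "map w [i..<i + 2] = [w i, w (Suc i)]" for i
    by (simp add: numeral_2_eq_2)
  moreover have "w \<in> omega_iter (star_conc V {[x] | x. x \<in> V - closed_nbhd V E v})
      \<longleftrightarrow> (\<exists>\<^sub>\<infinity>i. map w [i..<i + 1] \<in> {[x] | x. x \<in> V - closed_nbhd V E v})"
    by (rule omega_iter_star_conc_fixed_length_iff[OF w]) auto
  moreover have "w i \<in> V" for i
    using w unfolding omega_words_def by blast
  ultimately show ?thesis
    unfolding L_v_def by auto
qed

lemma colouring_same_colour_not_in_nbhd:
  assumes "colouring V E k c" and "x \<in> V" "v \<in> V" and "c x = c v" "x \<noteq> v"
  shows "x \<notin> closed_nbhd V E v"
  using assms unfolding colouring_def closed_nbhd_def by fastforce

lemma colouring_in_colours: "colouring V E k c \<Longrightarrow> a \<in> V \<Longrightarrow> c a \<in> {1..k}"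
  unfolding colouring_def by blast

definition colour_aut_trans :: "nat \<Rightarrow> 'v set \<Rightarrow> ('v \<Rightarrow> nat) \<Rightarrow> (nat \<times> 'v \<times> nat) set" where
  "colour_aut_trans k V c = {(p, a, q). p \<in> {1..k} \<and> a \<in> V \<and> q = c a}"

definition colour_aut_label ::
    "'v set \<Rightarrow> 'v set set \<Rightarrow> ('v \<Rightarrow> nat) \<Rightarrow> ('v \<Rightarrow> nat) \<Rightarrow> nat \<times> 'v \<times> nat \<Rightarrow> nat set" where
  "colour_aut_label V E c idx =
     (\<lambda>(p, a, q). idx ` {v \<in> V. (a = v \<and> p = c v) \<or> a \<notin> closed_nbhd V E v})"

lemma colour_aut_is_gba:
  assumes "finite V" "colouring V E k c" "0 < k"
  shows "is_gba {1..k} V 1 (colour_aut_trans k V c) (idx ` V) (colour_aut_label V E c idx)"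
  using assms colouring_in_colours[OF assms(2)]
  unfolding is_gba_def colour_aut_trans_def colour_aut_label_def by auto

lemma colour_aut_run_iff:
  assumes "w \<in> omega_words V" "colouring V E k c" "0 < k"
  shows "is_run 1 (colour_aut_trans k V c) w r \<longleftrightarrow> r = (\<lambda>i. case i of 0 \<Rightarrow> 1 | Suc j \<Rightarrow> c (w j))"
proof
  assume "is_run 1 (colour_aut_trans k V c) w r"
  then have "r 0 = 1" "r (Suc i) = c (w i)" for i
    unfolding is_run_def colour_aut_trans_def by auto
  then show "r = (\<lambda>i. case i of 0 \<Rightarrow> 1 | Suc j \<Rightarrow> c (w j))"
    by (intro ext) (simp split: nat.split)
next
  have "w i \<in> V" "c (w i) \<in> {1..k}" for i
    using assms(1) colouring_in_colours[OF assms(2)] unfolding omega_words_def by blast+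
  moreover assume "r = (\<lambda>i. case i of 0 \<Rightarrow> 1 | Suc j \<Rightarrow> c (w j))"
  ultimately show "is_run 1 (colour_aut_trans k V c) w r"
    using \<open>0 < k\<close> unfolding is_run_def colour_aut_trans_def by (simp split: nat.split)
qed

lemma colour_aut_emits_inf_often_iff:
  assumes w: "w \<in> omega_words V" and v: "v \<in> V" and c: "colouring V E k c"
    and idx: "inj_on idx V" and r: "\<And>i. r (Suc i) = c (w i)"
  shows "(\<exists>\<^sub>\<infinity>i. idx v \<in> colour_aut_label V E c idx (r i, w i, r (Suc i))) \<longleftrightarrow> w \<in> L_v V E v"
proof -
  let ?N = "closed_nbhd V E v"
  have wV: "w i \<in> V" for i
    using w unfolding omega_words_def by blast
  have "(\<exists>\<^sub>\<infinity>i. idx v \<in> colour_aut_label V E c idx (r i, w i, r (Suc i)))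
      \<longleftrightarrow> (\<exists>\<^sub>\<infinity>i. (w i = v \<and> r i = c v) \<or> w i \<notin> ?N)"
    using idx v by (simp add: colour_aut_label_def inj_on_image_mem_iff)
  also have "\<dots> \<longleftrightarrow> (\<exists>\<^sub>\<infinity>i. (w (Suc i) = v \<and> c (w i) = c v) \<or> w (Suc i) \<notin> ?N)"
    using INFM_Suc_iff[of "\<lambda>i. (w i = v \<and> r i = c v) \<or> w i \<notin> ?N"] by (simp add: r)
  also have "\<dots> \<longleftrightarrow> (\<exists>\<^sub>\<infinity>i. w (Suc i) = v \<and> c (w i) = c v) \<or> (\<exists>\<^sub>\<infinity>i. w i \<notin> ?N)"
    using INFM_Suc_iff[of "\<lambda>i. w i \<notin> ?N"] by (simp add: INFM_disj_distrib)
  also have "\<dots> \<longleftrightarrow> (\<exists>\<^sub>\<infinity>i. w i = v \<and> w (Suc i) = v) \<or> (\<exists>\<^sub>\<infinity>i. w i \<notin> ?N)"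
  proof
    assume "(\<exists>\<^sub>\<infinity>i. w (Suc i) = v \<and> c (w i) = c v) \<or> (\<exists>\<^sub>\<infinity>i. w i \<notin> ?N)"
    moreover have "w i = v \<and> w (Suc i) = v \<or> w i \<notin> ?N" if "w (Suc i) = v" "c (w i) = c v" for i
      using colouring_same_colour_not_in_nbhd[OF c wV v] that by blast
    ultimately have "\<exists>\<^sub>\<infinity>i. w i = v \<and> w (Suc i) = v \<or> w i \<notin> ?N"
      by (auto elim!: INFM_mono)
    then show "(\<exists>\<^sub>\<infinity>i. w i = v \<and> w (Suc i) = v) \<or> (\<exists>\<^sub>\<infinity>i. w i \<notin> ?N)"
      unfolding INFM_disj_distrib .
  qed (auto elim!: INFM_mono)
  also have "\<dots> \<longleftrightarrow> w \<in> L_v V E v"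
    using L_v_iff[OF w] by simp
  finally show ?thesis .
qed

lemma colour_aut_lang:
  assumes c: "colouring V E k c" and "0 < k" and idx: "inj_on idx V"
  shows "gba_lang V 1 (colour_aut_trans k V c) (idx ` V) (colour_aut_label V E c idx) = L_G V E"
proof (intro set_eqI)
  fix w
  show "w \<in> gba_lang V 1 (colour_aut_trans k V c) (idx ` V) (colour_aut_label V E c idx)
      \<longleftrightarrow> w \<in> L_G V E"
  proof (cases "w \<in> omega_words V")
    case w: True
    define r where "r = (\<lambda>i. case i of 0 \<Rightarrow> 1 | Suc j \<Rightarrow> c (w j))"
    have "w \<in> gba_lang V 1 (colour_aut_trans k V c) (idx ` V) (colour_aut_label V E c idx)
        \<longleftrightarrow> gba_accepting (idx ` V) (colour_aut_label V E c idx) w r"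
      using w colour_aut_run_iff[OF w c \<open>0 < k\<close>] unfolding gba_lang_def r_def by simp
    also have "\<dots> \<longleftrightarrow> (\<forall>v\<in>V. w \<in> L_v V E v)"
      unfolding gba_accepting_def using colour_aut_emits_inf_often_iff[OF w _ c idx]
      by (simp add: r_def)
    finally show ?thesis
      using w unfolding L_G_def by blast
  qed (simp add: gba_lang_def L_G_def)
qed

theorem lemma34:
  fixes V :: "'v set" and E :: "'v set set" and k :: nat
  assumes "finite_graph V E"
    and "0 < k"
    and "colourable V E k"
  shows "\<exists>(Q :: nat set) qi D (C :: nat set) col.
           is_gba Q V qi D C col \<and> deterministic Q V D \<and> complete_aut Q V D \<and>
           card Q = k \<and> gba_lang V qi D C col = L_G V E"
proof -
  have "finite V"
    using assms(1) unfolding finite_graph_def by blast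
  then obtain idx :: "'v \<Rightarrow> nat" where idx: "inj_on idx V"
    using finite_imp_inj_to_nat_seg by blast
  obtain c where c: "colouring V E k c"
    using assms(3) unfolding colourable_def by blast
  have "deterministic {1..k} V (colour_aut_trans k V c)"
    unfolding deterministic_def colour_aut_trans_def by blast
  moreover have "complete_aut {1..k} V (colour_aut_trans k V c)"
    unfolding complete_aut_def colour_aut_trans_def by blast
  ultimately show ?thesis
    using colour_aut_is_gba[OF \<open>finite V\<close> c \<open>0 < k\<close>] colour_aut_lang[OF c \<open>0 < k\<close> idx]
    by (metis card_atLeastAtMost diff_Suc_1)
qed

end
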